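(* Fix a continuous density $\rho_0$ on $[0,R)$ with mass function $m_0$, and let $p_1,p_2,p_3$ be three pairwise distinct solutions of the TOV system with this density, with central values $p_{c,i}=p_i(0)$. Then for every real $\lambda$, $$p(r)=\frac{\lambda\,p_1(r)[p_3(r)-p_2(r)]+(1-\lambda)\,p_2(r)[p_3(r)-p_1(r)]}{\lambda[p_3(r)-p_2(r)]+(1-\lambda)[p_3(r)-p_1(r)]}$$ solves the TOV system with density $\rho_0$ wherever the denominator does not vanish, and its central pressure is $$p_c=\frac{\lambda\,p_{c,1}[p_{c,3}-p_{c,2}]+(1-\lambda)\,p_{c,2}[p_{c,3}-p_{c,1}]}{\lambda[p_{c,3}-p_{c,2}]+(1-\lambda)[p_{c,3}-p_{c,1}]}.$$ *)

theory Defs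
  imports "HOL-Analysis.Analysis"
begin

definition mass_fun :: "(real \<Rightarrow> real) \<Rightarrow> real \<Rightarrow> real" where
  "mass_fun \<rho> r = integral {0..r} (\<lambda>s. 4 * pi * s^2 * \<rho> s)"

text \<open>Right-hand side of the TOV equation (units G = c = 1):
  p'(r) = - (rho(r) + p) (m(r) + 4 pi r^3 p) / (r (r - 2 m(r))).\<close>
definition tov_rhs :: "(real \<Rightarrow> real) \<Rightarrow> real \<Rightarrow> real \<Rightarrow> real" where
  "tov_rhs \<rho> r q =
     - (\<rho> r + q) * (mass_fun \<rho> r + 4 * pi * r^3 * q) / (r * (r - 2 * mass_fun \<rho> r))"

definition tov_solution :: "(real \<Rightarrow> real) \<Rightarrow> real \<Rightarrow> (real \<Rightarrow> real) \<Rightarrow> bool" where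
  "tov_solution \<rho> R p \<longleftrightarrow>
     continuous_on {0..<R} p \<and>
     (\<forall>r\<in>{0<..<R}. (p has_real_derivative tov_rhs \<rho> r (p r)) (at r))"

end

theory Submission
  imports Defs
begin

text \<open>For fixed r the right-hand side of the TOV equation is quadratic in the pressure, so
  the TOV equation is a Riccati equation q' = a + b q + c q^2. For such an equation the
  cross-ratio of four solutions is constant, and the family p is what one gets by solving the
  constant cross-ratio condition for the fourth solution. Directly: with p = N / D, the
  quotient-rule numerator N' D - N D' is a polynomial identity equal to
  a D^2 + b N D + c N^2 = D^2 f(N / D).\<close>

lemma riccati_quotient_identity:
  fixes a b c lam x1 x2 x3 :: "'a::comm_ring_1"
  defines "f \<equiv> \<lambda>q. a + b * q + c * q\<^sup>2"
    and "N \<equiv> lam * x1 * (x3 - x2) + (1 - lam) * x2 * (x3 - x1)"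
    and "D \<equiv> lam * (x3 - x2) + (1 - lam) * (x3 - x1)"
  shows "(lam * f x1 * (x3 - x2) + lam * x1 * (f x3 - f x2)
            + ((1 - lam) * f x2 * (x3 - x1) + (1 - lam) * x2 * (f x3 - f x1))) * D
          - N * (lam * (f x3 - f x2) + (1 - lam) * (f x3 - f x1))
       = a * D\<^sup>2 + b * N * D + c * N\<^sup>2"
  unfolding f_def N_def D_def power2_eq_square by (simp add: algebra_simps)

lemma riccati_solution_combination:
  fixes p1 p2 p3 :: "'a::real_normed_field \<Rightarrow> 'a" and a b c lam x :: 'a
  defines "f \<equiv> \<lambda>q. a + b * q + c * q\<^sup>2"
    and "N \<equiv> \<lambda>t. lam * p1 t * (p3 t - p2 t) + (1 - lam) * p2 t * (p3 t - p1 t)"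
    and "D \<equiv> \<lambda>t. lam * (p3 t - p2 t) + (1 - lam) * (p3 t - p1 t)"
  assumes "(p1 has_field_derivative f (p1 x)) (at x within S)"
    and "(p2 has_field_derivative f (p2 x)) (at x within S)"
    and "(p3 has_field_derivative f (p3 x)) (at x within S)"
    and "D x \<noteq> 0"
  shows "((\<lambda>t. N t / D t) has_field_derivative f (N x / D x)) (at x within S)"
proof -
  have deriv: "((\<lambda>t. N t / D t) has_field_derivative
          ((lam * f (p1 x) * (p3 x - p2 x) + lam * p1 x * (f (p3 x) - f (p2 x))
            + ((1 - lam) * f (p2 x) * (p3 x - p1 x) + (1 - lam) * p2 x * (f (p3 x) - f (p1 x))))
            * D x - N x * (lam * (f (p3 x) - f (p2 x)) + (1 - lam) * (f (p3 x) - f (p1 x))))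
          / (D x * D x)) (at x within S)" (is "(_ has_field_derivative ?E) _")
    unfolding N_def D_def using assms(4-7)[unfolded D_def]
    by (auto intro!: derivative_eq_intros simp: algebra_simps)
  have "?E = (a * (D x)\<^sup>2 + b * N x * D x + c * (N x)\<^sup>2) / (D x * D x)"
    unfolding N_def D_def f_def by (simp only: riccati_quotient_identity)
  also have "\<dots> = f (N x / D x)"
    using \<open>D x \<noteq> 0\<close> unfolding f_def by (simp add: field_simps power2_eq_square)
  finally have "?E = f (N x / D x)" .
  with deriv show ?thesis by simp
qed

lemma tov_rhs_quadratic: "\<exists>a b c. \<forall>q. tov_rhs \<rho> r q = a + b * q + c * q\<^sup>2"
proof (intro exI allI)
  fix q
  define m k K where "m = mass_fun \<rho> r" and "k = 4 * pi * r^3" and "K = r * (r - 2 * m)"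
  have "tov_rhs \<rho> r q = - (\<rho> r + q) * (m + k * q) / K"
    unfolding tov_rhs_def m_def k_def K_def ..
  also have "\<dots> = - \<rho> r * m / K + (- (m + k * \<rho> r) / K) * q + (- k / K) * q\<^sup>2"
    by (simp add: power2_eq_square add_divide_distrib diff_divide_distrib algebra_simps)
  finally show "tov_rhs \<rho> r q = \<dots>" .
qed

lemma tov_solution_has_derivative:
  assumes "tov_solution \<rho> R p" and "r \<in> {0<..<R}"
  shows "(p has_real_derivative tov_rhs \<rho> r (p r)) (at r)"
  using assms unfolding tov_solution_def by blast

lemma tov_solution_continuous_within:
  assumes "tov_solution \<rho> R p" and "r \<in> {0..<R}"
  shows "continuous (at r within {0..<R}) p"
  using assms unfolding tov_solution_def by (simp add: continuous_on_eq_continuous_within)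

theorem mainTheorem6:
  fixes \<rho>0 p1 p2 p3 :: "real \<Rightarrow> real" and R lam :: real
  assumes "R > 0"
    and "continuous_on {0..<R} \<rho>0"
    and "tov_solution \<rho>0 R p1" and "tov_solution \<rho>0 R p2" and "tov_solution \<rho>0 R p3"
    and "\<exists>r\<in>{0..<R}. p1 r \<noteq> p2 r"
    and "\<exists>r\<in>{0..<R}. p1 r \<noteq> p3 r"
    and "\<exists>r\<in>{0..<R}. p2 r \<noteq> p3 r"
  defines "D \<equiv> (\<lambda>r. lam * (p3 r - p2 r) + (1 - lam) * (p3 r - p1 r))"
    and "p \<equiv> (\<lambda>r. (lam * p1 r * (p3 r - p2 r) + (1 - lam) * p2 r * (p3 r - p1 r)) / (lam * (p3 r - p2 r) + (1 - lam) * (p3 r - p1 r)))"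
  shows "(\<forall>r\<in>{0<..<R}. D r \<noteq> 0 \<longrightarrow> (p has_real_derivative tov_rhs \<rho>0 r (p r)) (at r))
    \<and> (D 0 \<noteq> 0 \<longrightarrow> continuous (at 0 within {0..<R}) p)
    \<and> p 0 = (lam * p1 0 * (p3 0 - p2 0) + (1 - lam) * p2 0 * (p3 0 - p1 0))
            / (lam * (p3 0 - p2 0) + (1 - lam) * (p3 0 - p1 0))"
proof (intro conjI ballI impI)
  fix r assume r: "r \<in> {0<..<R}" and "D r \<noteq> 0"
  obtain a b c where quad: "\<And>q. tov_rhs \<rho>0 r q = a + b * q + c * q\<^sup>2"
    using tov_rhs_quadratic by blast
  note derivs = tov_solution_has_derivative[OF assms(3) r]
    tov_solution_has_derivative[OF assms(4) r] tov_solution_has_derivative[OF assms(5) r]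
  have "(p has_real_derivative a + b * p r + c * (p r)\<^sup>2) (at r)"
    unfolding p_def using derivs \<open>D r \<noteq> 0\<close>
    by (intro riccati_solution_combination) (simp_all add: quad D_def)
  then show "(p has_real_derivative tov_rhs \<rho>0 r (p r)) (at r)"
    by (simp add: quad)
next
  assume "D 0 \<noteq> 0"
  moreover have "0 \<in> {0..<R}" using \<open>R > 0\<close> by simp
  ultimately show "continuous (at 0 within {0..<R}) p"
    unfolding p_def D_def using assms(3-5)
    by (intro continuous_intros tov_solution_continuous_within) auto
qed (simp add: p_def)

end
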